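(* Let $\Omega$ be a finite set, $\Lambda_0^\omega>0$ for $\omega\in\Omega$, and $\Lambda_m^\omega=m\Lambda_0^\omega$ for $m\in\mathbb{N}$. Fix $\beta>0$ and $\omega^{key}\in\Omega$, and let $n_m=\Lambda_m^{\omega^{key}}+\beta\sqrt{\Lambda_m^{\omega^{key}}}$. Then $\lim_{m\to\infty}\bar\alpha(n_m,\Lambda_m^{\omega^{key}})$ exists and lies in $(0,1)$; for every $\omega$ with $\Lambda_0^\omega>\Lambda_0^{\omega^{key}}$, $\lim_{m\to\infty}\bar\alpha(n_m,\Lambda_m^\omega)=1$; and for every $\omega$ with $\Lambda_0^\omega<\Lambda_0^{\omega^{key}}$, $\lim_{m\to\infty}\bar\alpha(n_m,\Lambda_m^\omega)=0$.
   Context: For $\lambda>0$ and real $n\ge 0$, the continuous Erlang-C function is $\bar\alpha(n,\lambda)=\min\Big\{1,\big[\lambda\int_0^\infty t e^{-\lambda t}(1+t)^{n-1}\,dt\big]^{-1}\Big\}$; for $n\ge\lambda$ the minimum is attained by the second term, for $n<\lambda$ it equals 1, and for integer $n>\lambda$ it equals the Erlang-C probability that an arriving customer waits in an $M/M/n$ queue with arrival rate $\lambda$ and service rate 1. *)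

theory Defs
  imports "HOL-Analysis.Analysis"
begin

definition alpha_bar :: "real \<Rightarrow> real \<Rightarrow> real" where
  "alpha_bar n lam =
     min 1 (inverse (lam * integral {0..} (\<lambda>t. t * exp (- lam * t) * (1 + t) powr (n - 1))))"

end

theory Submission imports Defs "HOL-Real_Asymp.Real_Asymp" begin

(* Substituting t = s / r with r = sqrt lam turns the integral defining the
   continuous Erlang-C function into the integral over [0,oo) of the kernel
       erlang_kernel r p s = s * exp (-r s) * (1 + s/r) powr p,     p = n - 1,
   so that alpha_bar n lam = min 1 (1 / M) with M = kernel_mass r p its integral.  With
   lam_m = m * c and n_m = m a + beta sqrt (m a) there are three regimes:
   - c = a (critical, square-root staffing): p = r^2 + beta r - 1, the kernel converges
     pointwise to s * exp (beta s - s^2/2) under an exponential majorant, so by dominated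
     convergence M tends to a constant > 1 and alpha_bar tends to its inverse, in (0,1);
   - c > a (overloaded): r^2 - p >= 3 r eventually, the kernel is below exp(-s)/2, so
     0 < M <= 1/2 and alpha_bar = 1 eventually;
   - c < a (underloaded): p >= r^2 (1 + d) eventually, the kernel exceeds d r / 2 on
     [d r / 2, d r], so M >= d^2 r^2 / 4 grows linearly in m and alpha_bar tends to 0.
   The file first collects elementary inequalities, then the kernel and its rescaling
   identity, then one section per regime, and finally combines them into corollary1. *)

lemma ln_le_tangent:
  fixes y y0 :: real
  assumes "y > 0" "y0 > 0"
  shows "ln y \<le> ln y0 + (y - y0) / y0"
proof -
  have "ln (y / y0) \<le> y / y0 - 1" using assms by (intro ln_le_minus_one) auto
  also have "y / y0 - 1 = (y - y0) / y0" using assms by (simp add: field_simps)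
  finally show ?thesis using assms by (simp add: ln_div)
qed

lemma ln_one_plus_ge:
  fixes u :: real
  assumes "u \<ge> 0"
  shows "u / (1 + u) \<le> ln (1 + u)"
proof -
  have "ln (1 / (1 + u)) \<le> 1 / (1 + u) - 1" using assms by (intro ln_le_minus_one) auto
  moreover have "ln (1 / (1 + u)) = - ln (1 + u)" using assms by (simp add: ln_div)
  moreover have "1 / (1 + u) - 1 = - (u / (1 + u))" using assms by (simp add: field_simps)
  ultimately show ?thesis by linarith
qed

lemma mult_exp_le_half_rate:
  fixes s a :: real
  assumes "a > 0" "s \<ge> 0"
  shows "s * exp (- a * s) \<le> (2 / a) * exp (- (a / 2) * s)"
proof -
  have "(a / 2) * s \<le> exp ((a / 2) * s)" using exp_ge_add_one_self[of "(a / 2) * s"] by linarith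
  hence "s * exp (- (a / 2) * s) \<le> (2 / a) * exp ((a / 2) * s) * exp (- (a / 2) * s)"
    using assms by (intro mult_right_mono) (auto simp: field_simps)
  also have "\<dots> = 2 / a" by (simp add: mult.assoc flip: exp_add)
  finally have "s * exp (- (a / 2) * s) * exp (- (a / 2) * s) \<le> (2 / a) * exp (- (a / 2) * s)"
    by (intro mult_right_mono) auto
  also have "s * exp (- (a / 2) * s) * exp (- (a / 2) * s) = s * exp (- a * s)"
    by (simp add: mult.assoc flip: exp_add)
  finally show ?thesis .
qed

lemma integrable_on_exp_dominated:
  fixes f :: "real \<Rightarrow> real"
  assumes cont: "continuous_on {0..} f" and a: "a > 0"
    and bound: "\<And>s. s \<ge> 0 \<Longrightarrow> \<bar>f s\<bar> \<le> C * exp (- a * s)"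
  shows "f integrable_on {0..}"
proof (rule measurable_bounded_by_integrable_imp_integrable)
  show "f \<in> borel_measurable (lebesgue_on {0..})"
    by (rule continuous_imp_measurable_on_sets_lebesgue[OF cont]) simp
  show "(\<lambda>s. C * exp (- a * s)) integrable_on {0..}"
    using integrable_on_exp_minus_to_infinity[OF a, of 0] by (rule integrable_on_mult_right)
  show "norm (f x) \<le> C * exp (- a * x)" if "x \<in> {0..}" for x using bound that by simp
qed simp

lemma integral_ge_on_subinterval:
  fixes f :: "real \<Rightarrow> real"
  assumes f: "f integrable_on S" and nonneg: "\<And>x. x \<in> S \<Longrightarrow> f x \<ge> 0"
    and sub: "{a..b} \<subseteq> S" and ab: "a \<le> b" and lower: "\<And>x. x \<in> {a..b} \<Longrightarrow> f x \<ge> k"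
  shows "k * (b - a) \<le> integral S f"
proof -
  have fi: "f integrable_on {a..b}" by (rule integrable_on_subinterval[OF f sub])
  have "k * (b - a) = integral {a..b} (\<lambda>_. k)" using ab by simp
  also have "\<dots> \<le> integral {a..b} f" by (intro integral_le fi) (auto intro: lower)
  also have "\<dots> \<le> integral S f" by (intro integral_subset_le sub fi f) (use nonneg in auto)
  finally show ?thesis .
qed

section \<open>The rescaled Erlang kernel\<close>

text \<open>The integrand after the substitution t = s / r, where r^2 is the arrival rate and
  p = n - 1; its mass over [0,\<infinity>) determines alpha_bar.\<close>
definition erlang_kernel :: "real \<Rightarrow> real \<Rightarrow> real \<Rightarrow> real" where
  "erlang_kernel r p s = s * exp (- r * s) * (1 + s / r) powr p"

definition kernel_mass :: "real \<Rightarrow> real \<Rightarrow> real" where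
  "kernel_mass r p = integral {0..} (erlang_kernel r p)"

lemma kernel_exp_form:
  assumes "r > 0" "s \<ge> 0"
  shows "erlang_kernel r p s = s * exp (- r * s + p * ln (1 + s / r))"
proof -
  have "1 + s / r > 0" using assms by (simp add: add_pos_nonneg)
  thus ?thesis by (simp add: erlang_kernel_def powr_def mult.assoc flip: exp_add)
qed

lemma kernel_nonneg: "r > 0 \<Longrightarrow> s \<ge> 0 \<Longrightarrow> erlang_kernel r p s \<ge> 0"
  unfolding erlang_kernel_def by simp

lemma kernel_continuous: "r > 0 \<Longrightarrow> continuous_on {0..} (erlang_kernel r p)"
  unfolding erlang_kernel_def by (intro continuous_intros) (auto, smt (verit) divide_nonneg_pos)

lemma kernel_powr_bound:
  fixes r p s :: real
  assumes r: "r > 0" and s: "s \<ge> 0"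
  shows "(1 + s / r) powr p \<le> exp (max p 0 * ln (1 + 2 * max p 0 / r\<^sup>2)) * exp (r * s / 2)"
proof (cases "p \<le> 0")
  case True
  have "(1 + s / r) powr p \<le> 1 powr p" using True r s by (intro powr_mono2') auto
  also have "\<dots> \<le> exp (max p 0 * ln (1 + 2 * max p 0 / r\<^sup>2)) * exp (r * s / 2)"
    using True r s by simp
  finally show ?thesis .
next
  case False
  define U where "U = 2 * p / r\<^sup>2"
  have U: "U > 0" using False r by (simp add: U_def)
  have "ln (1 + s / r) \<le> ln (1 + U) + ((1 + s / r) - (1 + U)) / (1 + U)"
    using U r s by (intro ln_le_tangent) (auto simp: add_pos_nonneg)
  also have "\<dots> \<le> ln (1 + U) + (s / r) / (1 + U)"
    using U r s by (intro add_left_mono divide_right_mono) auto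
  finally have "p * ln (1 + s / r) \<le> p * (ln (1 + U) + (s / r) / (1 + U))"
    using False by (intro mult_left_mono) auto
  also have "\<dots> = p * ln (1 + U) + s * (p / (r * (1 + U)))" by (simp add: field_simps)
  also have "p / (r * (1 + U)) \<le> r / 2"
  proof -
    have pos: "r * (1 + U) > 0" using U r by simp
    have "r / 2 * (r * (1 + U)) = r\<^sup>2 / 2 + p" using r by (simp add: U_def field_simps power2_eq_square)
    thus ?thesis using r by (simp add: pos_divide_le_eq[OF pos])
  qed
  hence "s * (p / (r * (1 + U))) \<le> s * (r / 2)" using s by (intro mult_left_mono) auto
  finally have "p * ln (1 + s / r) \<le> p * ln (1 + U) + r * s / 2" by (simp add: mult.commute)
  moreover have "(1 + s / r) powr p = exp (p * ln (1 + s / r))"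
  proof -
    have "1 + s / r > 0" using r s by (simp add: add_pos_nonneg)
    thus ?thesis by (simp add: powr_def)
  qed
  ultimately show ?thesis using False by (simp add: U_def flip: exp_add)
qed

lemma kernel_integrable:
  assumes r: "r > 0"
  shows "erlang_kernel r p integrable_on {0..}"
proof -
  define B where "B = exp (max p 0 * ln (1 + 2 * max p 0 / r\<^sup>2))"
  show ?thesis
  proof (rule integrable_on_exp_dominated[OF kernel_continuous[OF r], where a = "r / 4" and C = "B * (4 / r)"])
    fix s :: real assume s: "s \<ge> 0"
    have "\<bar>erlang_kernel r p s\<bar> = s * exp (- r * s) * (1 + s / r) powr p"
      using kernel_nonneg[OF r s] by (simp add: erlang_kernel_def)
    also have "\<dots> \<le> s * exp (- r * s) * (B * exp (r * s / 2))"
      using kernel_powr_bound[OF r s, of p] s by (intro mult_left_mono) (auto simp: B_def)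
    also have "\<dots> = B * (s * exp (- (r / 2) * s))" by (simp add: algebra_simps flip: exp_add)
    also have "\<dots> \<le> B * ((2 / (r / 2)) * exp (- ((r / 2) / 2) * s))"
      using r s by (intro mult_left_mono mult_exp_le_half_rate) (auto simp: B_def)
    finally show "\<bar>erlang_kernel r p s\<bar> \<le> B * (4 / r) * exp (- (r / 4) * s)" by simp
  qed (use r in simp)
qed

lemma alpha_bar_kernel_mass:
  assumes lam: "lam > 0"
  shows "alpha_bar n lam = min 1 (inverse (kernel_mass (sqrt lam) (n - 1)))"
proof -
  define r where "r = sqrt lam"
  have r: "r > 0" using lam by (simp add: r_def)
  have rr: "r * r = lam" using lam by (simp add: r_def)
  have image: "(\<lambda>t. r * t) ` {0..} = {0..}"
  proof (intro equalityI subsetI)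
    fix y :: real assume "y \<in> {0..}"
    thus "y \<in> (\<lambda>t. r * t) ` {0..}" using r by (intro image_eqI[of _ _ "y / r"]) auto
  qed (use r in auto)
  have abs_int: "erlang_kernel r (n - 1) absolutely_integrable_on {0..}"
    by (rule nonnegative_absolutely_integrable_1[OF kernel_integrable[OF r]])
       (use kernel_nonneg[OF r] in auto)
  have substitution: "(\<lambda>t. \<bar>r\<bar> * erlang_kernel r (n - 1) (r * t)) absolutely_integrable_on {0..} \<and>
        integral {0..} (\<lambda>t. \<bar>r\<bar> * erlang_kernel r (n - 1) (r * t)) = kernel_mass r (n - 1)
     \<longleftrightarrow> erlang_kernel r (n - 1) absolutely_integrable_on ((\<lambda>t. r * t) ` {0..}) \<and>
        integral ((\<lambda>t. r * t) ` {0..}) (erlang_kernel r (n - 1)) = kernel_mass r (n - 1)"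
    unfolding kernel_mass_def
    by (rule has_absolute_integral_change_of_variables_1')
       (use r in \<open>auto intro!: derivative_eq_intros simp: inj_on_def\<close>)
  have integrand: "\<bar>r\<bar> * erlang_kernel r (n - 1) (r * t) = lam * (t * exp (- lam * t) * (1 + t) powr (n - 1))"
    for t
    using r by (simp add: erlang_kernel_def algebra_simps flip: rr)
  have "lam * integral {0..} (\<lambda>t. t * exp (- lam * t) * (1 + t) powr (n - 1)) = kernel_mass r (n - 1)"
    using substitution abs_int image unfolding integrand kernel_mass_def by simp
  thus ?thesis unfolding alpha_bar_def r_def by simp
qed

section \<open>Critical load: square-root staffing\<close>

lemma critical_kernel_bound:
  fixes r s \<beta> :: real
  assumes b: "\<beta> > 0" and r: "r \<ge> 1" and s: "s \<ge> 0"
  shows "erlang_kernel r (r * r + \<beta> * r - 1) s \<le> 4 * exp ((2 * \<beta> + 1) * (2 * \<beta> + 1)) * exp (- (1 / 4) * s)"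
proof -
  define S where "S = 2 * \<beta> + 1"
  define p where "p = r * r + \<beta> * r - 1"
  have r0: "r > 0" and S0: "S > 0" using r b by (auto simp: S_def)
  have rS: "r + S > 0" using r0 S0 by simp
  have "r * r \<ge> 1" using mult_mono[of 1 r 1 r] r by simp
  moreover have "\<beta> * r > 0" using b r0 by simp
  ultimately have p0: "p \<ge> 0" unfolding p_def by linarith
  have "ln (1 + s / r) \<le> ln (1 + S / r) + ((1 + s / r) - (1 + S / r)) / (1 + S / r)"
    using r0 s S0 by (intro ln_le_tangent) (auto simp: add_pos_nonneg)
  also have "((1 + s / r) - (1 + S / r)) / (1 + S / r) = (s - S) / (r + S)"
  proof -
    have "(1 + s / r) - (1 + S / r) = (s - S) / r" by (simp add: diff_divide_distrib)
    moreover have "1 + S / r = (r + S) / r" using r0 by (simp add: field_simps)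
    ultimately show ?thesis using r0 rS by simp
  qed
  also have "ln (1 + S / r) \<le> S / r" using S0 r0 by (intro ln_add_one_self_le_self) simp
  finally have "p * ln (1 + s / r) \<le> p * (S / r + (s - S) / (r + S))"
    using p0 by (intro mult_left_mono) auto
  also have "\<dots> = (p * S * S) / (r * (r + S)) + p * s / (r + S)"
  proof -
    have "S / r + (s - S) / (r + S) = (S * S + s * r) / (r * (r + S))"
      using r0 rS by (simp add: field_simps)
    also have "\<dots> = (S * S) / (r * (r + S)) + s / (r + S)"
      using r0 rS by (simp add: add_divide_distrib)
    finally show ?thesis by (simp add: distrib_left)
  qed
  also have "(p * S * S) / (r * (r + S)) \<le> S * S"
  proof -
    have "p \<le> r * (r + S)" using b r0 by (simp add: p_def S_def algebra_simps)
    hence "p * (S * S) \<le> r * (r + S) * (S * S)" by (intro mult_right_mono) auto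
    thus ?thesis using r0 rS by (simp add: pos_divide_le_eq mult.assoc mult.commute mult.left_commute)
  qed
  also have "p * s / (r + S) \<le> (r - 1 / 2) * s"
  proof -
    have "\<beta> * r \<ge> \<beta>" using mult_left_mono[of 1 r \<beta>] b r by simp
    hence "p \<le> (r - 1 / 2) * (r + S)" using r0 by (simp add: p_def S_def algebra_simps)
    hence "p * s \<le> (r - 1 / 2) * (r + S) * s" using s by (intro mult_right_mono) auto
    thus ?thesis using rS by (simp add: pos_divide_le_eq mult.assoc mult.commute mult.left_commute)
  qed
  finally have exponent: "- r * s + p * ln (1 + s / r) \<le> S * S - s / 2" by (simp add: algebra_simps)
  have "erlang_kernel r p s \<le> s * exp (S * S - s / 2)"
    unfolding kernel_exp_form[OF r0 s] using exponent s by (intro mult_left_mono) auto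
  also have "\<dots> = exp (S * S) * (s * exp (- (1 / 2) * s))" by (simp add: algebra_simps flip: exp_add)
  also have "\<dots> \<le> exp (S * S) * ((2 / (1 / 2)) * exp (- ((1 / 2) / 2) * s))"
    using s by (intro mult_left_mono mult_exp_le_half_rate) auto
  finally show ?thesis by (simp add: S_def p_def)
qed

lemma critical_kernel_limit:
  fixes \<beta> s :: real
  assumes "s \<ge> 0"
  shows "((\<lambda>r. erlang_kernel r (r * r + \<beta> * r - 1) s) \<longlongrightarrow> s * exp (\<beta> * s - s * s / 2)) at_top"
proof (cases "s = 0")
  case False
  with assms have "s > 0" by simp
  thus ?thesis unfolding erlang_kernel_def by real_asymp
qed (simp add: erlang_kernel_def)

text \<open>The limiting mass exceeds 1: integrating by parts on [0,A] gives
  1 - q A + \<beta> \<integral>q with q s = exp (\<beta> s - s^2/2), and for A large the last term beats q A.\<close>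
lemma critical_limit_mass_gt_1:
  fixes \<beta> :: real
  assumes b: "\<beta> > 0"
    and integrable: "(\<lambda>s. s * exp (\<beta> * s - s * s / 2)) integrable_on {0..}"
  shows "integral {0..} (\<lambda>s. s * exp (\<beta> * s - s * s / 2)) > 1"
proof -
  define q where "q = (\<lambda>s::real. exp (\<beta> * s - s * s / 2))"
  define A where "A = 2 * \<beta> + 2 + \<bar>ln \<beta>\<bar>"
  have A1: "A \<ge> 1" using b by (simp add: A_def)
  have ftc: "((\<lambda>s. (s - \<beta>) * q s) has_integral (- q A - (- q 0))) {0..A}"
  proof (rule fundamental_theorem_of_calculus)
    fix x assume "x \<in> {0..A}"
    show "((\<lambda>s. - q s) has_vector_derivative (x - \<beta>) * q x) (at x within {0..A})"
      unfolding q_def has_real_derivative_iff_has_vector_derivative[symmetric]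
      by (auto intro!: derivative_eq_intros simp: algebra_simps)
  qed (use A1 in simp)
  have qi: "q integrable_on {0..A}"
    unfolding q_def by (intro integrable_continuous_interval continuous_intros) auto
  have "((\<lambda>s. (s - \<beta>) * q s + \<beta> * q s) has_integral (1 - q A + \<beta> * integral {0..A} q)) {0..A}"
    using has_integral_add[OF ftc has_integral_mult_right[OF integrable_integral[OF qi], of \<beta>]]
    by (simp add: q_def)
  moreover have "(\<lambda>s. (s - \<beta>) * q s + \<beta> * q s) = (\<lambda>s. s * exp (\<beta> * s - s * s / 2))"
    by (auto simp: q_def algebra_simps)
  ultimately have on_A: "((\<lambda>s. s * exp (\<beta> * s - s * s / 2)) has_integral (1 - q A + \<beta> * integral {0..A} q)) {0..A}"
    by simp
  have q_mass: "exp (- 1 / 2) * (1 - 0) \<le> integral {0..A} q"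
  proof (rule integral_ge_on_subinterval[OF qi])
    fix x :: real assume x: "x \<in> {0..1}"
    have "x * x \<le> 1" using x mult_mono[of x 1 x 1] by auto
    moreover have "\<beta> * x \<ge> 0" using b x by simp
    ultimately show "exp (- 1 / 2) \<le> q x" by (simp add: q_def)
  next
    show "\<And>x. x \<in> {0..A} \<Longrightarrow> q x \<ge> 0" by (simp add: q_def)
    show "{0..1} \<subseteq> {0..A}" using A1 by auto
  qed simp
  have q_tail: "q A \<le> exp (- 2) * \<beta>"
  proof -
    have "\<beta> * A - A * A / 2 = A * (- 1 - \<bar>ln \<beta>\<bar> / 2)" by (simp add: A_def algebra_simps)
    also have "\<dots> \<le> A * (- 1)" using A1 by (intro mult_left_mono) auto
    also have "\<dots> \<le> - 2 + ln \<beta>" using b unfolding A_def by (smt (verit))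
    finally have "q A \<le> exp (- 2 + ln \<beta>)" by (simp add: q_def)
    also have "\<dots> = exp (- 2) * \<beta>" using b by (simp add: exp_diff exp_minus divide_inverse mult.commute)
    finally show ?thesis .
  qed
  have "exp (- 2) * \<beta> < exp (- 1 / 2) * \<beta>" using b by simp
  moreover have "exp (- 1 / 2) * \<beta> \<le> \<beta> * integral {0..A} q" using q_mass b by (simp add: mult.commute)
  ultimately have "1 < 1 - q A + \<beta> * integral {0..A} q" using q_tail by linarith
  also have "\<dots> = integral {0..A} (\<lambda>s. s * exp (\<beta> * s - s * s / 2))"
    using on_A by (simp add: integral_unique)
  also have "\<dots> \<le> integral {0..} (\<lambda>s. s * exp (\<beta> * s - s * s / 2))"
    using on_A integrable by (intro integral_subset_le) (auto simp: integrable_on_def)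
  finally show ?thesis .
qed

lemma critical_kernel_mass_sequence:
  fixes \<beta> :: real and r :: "nat \<Rightarrow> real"
  assumes b: "\<beta> > 0" and r1: "\<And>k. r k \<ge> 1" and r_lim: "filterlim r at_top sequentially"
  defines "g \<equiv> (\<lambda>s::real. s * exp (\<beta> * s - s * s / 2))"
  shows "g integrable_on {0..}"
    and "(\<lambda>k. kernel_mass (r k) (r k * r k + \<beta> * r k - 1)) \<longlonglongrightarrow> integral {0..} g"
proof -
  define f where "f = (\<lambda>k. erlang_kernel (r k) (r k * r k + \<beta> * r k - 1))"
  define h where "h = (\<lambda>s::real. 4 * exp ((2 * \<beta> + 1) * (2 * \<beta> + 1)) * exp (- (1 / 4) * s))"
  have "f k integrable_on {0..}" for k unfolding f_def using r1[of k] by (intro kernel_integrable) simp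
  moreover have "h integrable_on {0..}"
    unfolding h_def by (rule integrable_on_mult_right[OF integrable_on_exp_minus_to_infinity]) simp
  moreover have "norm (f k s) \<le> h s" if "s \<in> {0..}" for k s
    using kernel_nonneg[of "r k" s] critical_kernel_bound[OF b r1[of k], of s] r1[of k] that
    by (auto simp: f_def h_def)
  moreover have "(\<lambda>k. f k s) \<longlonglongrightarrow> g s" if "s \<in> {0..}" for s
    using filterlim_compose[OF critical_kernel_limit r_lim] that by (simp add: f_def g_def)
  ultimately have "g integrable_on {0..} \<and> (\<lambda>k. integral {0..} (f k)) \<longlonglongrightarrow> integral {0..} g"
    using dominated_convergence[of f "{0..}" h g] by blast
  thus "g integrable_on {0..}"
    and "(\<lambda>k. kernel_mass (r k) (r k * r k + \<beta> * r k - 1)) \<longlonglongrightarrow> integral {0..} g"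
    by (simp_all add: f_def kernel_mass_def)
qed

lemma critical_alpha_limit:
  fixes \<beta> :: real
  assumes b: "\<beta> > 0"
  shows "\<exists>L. ((\<lambda>r. min 1 (inverse (kernel_mass r (r * r + \<beta> * r - 1)))) \<longlongrightarrow> L) at_top \<and> 0 < L \<and> L < 1"
proof -
  define g where "g = (\<lambda>s::real. s * exp (\<beta> * s - s * s / 2))"
  define K where "K = integral {0..} g"
  have mass_lim: "((\<lambda>r. kernel_mass r (r * r + \<beta> * r - 1)) \<longlongrightarrow> K) at_top"
  proof (rule tendsto_at_topI_sequentially)
    fix X :: "nat \<Rightarrow> real" assume X: "filterlim X at_top sequentially"
    define Y where "Y = (\<lambda>k. max 1 (X k))"
    have Y: "filterlim Y at_top sequentially"
      unfolding Y_def by (rule filterlim_at_top_mono[OF X]) auto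
    have "(\<lambda>k. kernel_mass (Y k) (Y k * Y k + \<beta> * Y k - 1)) \<longlonglongrightarrow> K"
      using critical_kernel_mass_sequence(2)[OF b _ Y] by (simp add: Y_def K_def g_def)
    moreover have "\<forall>\<^sub>F k in sequentially. Y k = X k"
      using filterlim_at_top_dense[THEN iffD1, OF X, rule_format, of 1] by (auto simp: Y_def elim: eventually_mono)
    hence "\<forall>\<^sub>F k in sequentially. kernel_mass (Y k) (Y k * Y k + \<beta> * Y k - 1)
        = kernel_mass (X k) (X k * X k + \<beta> * X k - 1)"
      by (rule eventually_mono) simp
    ultimately show "(\<lambda>k. kernel_mass (X k) (X k * X k + \<beta> * X k - 1)) \<longlonglongrightarrow> K"
      by (rule Lim_transform_eventually)
  qed
  have "filterlim (\<lambda>k::nat. real k + 1) at_top sequentially" by real_asymp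
  hence "K > 1"
    using critical_limit_mass_gt_1[OF b] critical_kernel_mass_sequence(1)[OF b, of "\<lambda>k. real k + 1"]
    unfolding K_def g_def by simp
  hence "((\<lambda>r. min 1 (inverse (kernel_mass r (r * r + \<beta> * r - 1)))) \<longlongrightarrow> min 1 (inverse K)) at_top"
    using mass_lim by (intro tendsto_intros) auto
  moreover have "min 1 (inverse K) = inverse K" "0 < inverse K" "inverse K < 1"
    using \<open>K > 1\<close> by (auto simp: inverse_less_1_iff)
  ultimately show ?thesis by metis
qed

lemma alpha_bar_critical_limit:
  fixes a \<beta> :: real
  assumes a: "a > 0" and b: "\<beta> > 0"
  shows "\<exists>L. (\<lambda>m. alpha_bar (real m * a + \<beta> * sqrt (real m * a)) (real m * a)) \<longlonglongrightarrow> L \<and> 0 < L \<and> L < 1"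
proof -
  obtain L where L: "((\<lambda>r. min 1 (inverse (kernel_mass r (r * r + \<beta> * r - 1)))) \<longlongrightarrow> L) at_top"
    and L01: "0 < L" "L < 1"
    using critical_alpha_limit[OF b] by blast
  have "filterlim (\<lambda>m::nat. sqrt (real m * a)) at_top sequentially" using a by real_asymp
  from filterlim_compose[OF L this]
  have "(\<lambda>m. min 1 (inverse (kernel_mass (sqrt (real m * a))
          (sqrt (real m * a) * sqrt (real m * a) + \<beta> * sqrt (real m * a) - 1)))) \<longlonglongrightarrow> L" .
  moreover have "\<forall>\<^sub>F m in sequentially. min 1 (inverse (kernel_mass (sqrt (real m * a))
          (sqrt (real m * a) * sqrt (real m * a) + \<beta> * sqrt (real m * a) - 1)))
        = alpha_bar (real m * a + \<beta> * sqrt (real m * a)) (real m * a)"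
    by (rule eventually_mono[OF eventually_gt_at_top[of 0]]) (use a in \<open>simp add: alpha_bar_kernel_mass\<close>)
  ultimately show ?thesis using L01 by (blast intro: Lim_transform_eventually)
qed

section \<open>Overload: alpha_bar equals 1 eventually\<close>

lemma kernel_mass_le_half:
  fixes r p :: real
  assumes r: "r > 0" and p: "p \<ge> 0" and drift: "r * r - p \<ge> 3 * r"
  shows "kernel_mass r p \<le> 1 / 2"
proof -
  define D where "D = r - p / r"
  have D3: "D \<ge> 3"
    using drift r by (simp add: D_def field_simps)
  have bound: "erlang_kernel r p s \<le> (1 / 2) * exp (- 1 * s)" if s: "s \<ge> 0" for s
  proof -
    have "p * ln (1 + s / r) \<le> p * (s / r)"
      using r s p by (intro mult_left_mono ln_add_one_self_le_self) auto
    hence "erlang_kernel r p s \<le> s * exp (- D * s)"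
      unfolding kernel_exp_form[OF r s] using s by (intro mult_left_mono) (auto simp: D_def algebra_simps)
    also have "\<dots> = (s * exp (- (D - 1) * s)) * exp (- 1 * s)"
      by (simp add: mult.assoc flip: exp_add) (simp add: algebra_simps)
    also have "\<dots> \<le> (1 / 2) * exp (- 1 * s)"
    proof (rule mult_right_mono)
      show "s * exp (- (D - 1) * s) \<le> 1 / 2"
      proof -
      have "2 * s \<le> (D - 1) * s" using D3 s by (intro mult_right_mono) auto
      also have "\<dots> \<le> exp ((D - 1) * s)" using exp_ge_add_one_self[of "(D - 1) * s"] by linarith
      finally have "2 * s * exp (- (D - 1) * s) \<le> exp ((D - 1) * s) * exp (- (D - 1) * s)"
        by (intro mult_right_mono) auto
      also have "\<dots> = 1" by (simp add: algebra_simps flip: exp_add)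
      finally show ?thesis by simp
      qed
    qed simp
    finally show ?thesis .
  qed
  have exp_int: "((\<lambda>s::real. exp (- 1 * s)) has_integral 1) {0..}"
    using has_integral_exp_minus_to_infinity[of 1 0] by simp
  have "kernel_mass r p \<le> integral {0..} (\<lambda>s. (1 / 2) * exp (- 1 * s))"
    unfolding kernel_mass_def using exp_int kernel_integrable[OF r] bound
    by (intro integral_le integrable_on_mult_right) (auto simp: integrable_on_def)
  also have "\<dots> = 1 / 2" using exp_int by (simp add: integral_unique)
  finally show ?thesis .
qed

text \<open>For p \<ge> 0 the kernel mass is positive (the kernel exceeds exp(-2r) on [1,2]).\<close>
lemma kernel_mass_pos:
  fixes r p :: real
  assumes r: "r > 0" and p: "p \<ge> 0"
  shows "kernel_mass r p > 0"
proof -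
  have "exp (- 2 * r) * (2 - 1) \<le> kernel_mass r p"
    unfolding kernel_mass_def
  proof (rule integral_ge_on_subinterval[OF kernel_integrable[OF r]])
    fix s :: real assume s: "s \<in> {1..2}"
    have "exp (- 2 * r) \<le> s * exp (- r * s)"
      using s r mult_mono[of 1 s "exp (- 2 * r)" "exp (- r * s)"] by auto
    moreover have "1 \<le> (1 + s / r) powr p" using s r p by (intro ge_one_powr_ge_zero) auto
    ultimately have "exp (- 2 * r) * 1 \<le> s * exp (- r * s) * (1 + s / r) powr p"
      using s by (intro mult_mono) auto
    thus "exp (- 2 * r) \<le> erlang_kernel r p s" by (simp add: erlang_kernel_def)
  qed (use kernel_nonneg[OF r] in auto)
  hence "exp (- 2 * r) \<le> kernel_mass r p" by simp
  thus ?thesis using exp_gt_zero[of "- 2 * r"] by linarith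
qed

lemma alpha_bar_overload_limit:
  fixes a c \<beta> :: real
  assumes a: "a > 0" and ca: "c > a" and b: "\<beta> > 0"
  shows "(\<lambda>m. alpha_bar (real m * a + \<beta> * sqrt (real m * a)) (real m * c)) \<longlonglongrightarrow> 1"
proof (rule tendsto_eventually)
  have "\<forall>\<^sub>F m in sequentially. real m * c - (real m * a + \<beta> * sqrt (real m * a) - 1) \<ge> 3 * sqrt (real m * c)
      \<and> real m * a + \<beta> * sqrt (real m * a) - 1 \<ge> 0 \<and> real m \<ge> 1"
    using a ca b by (intro eventually_conj; real_asymp)
  thus "\<forall>\<^sub>F m in sequentially. alpha_bar (real m * a + \<beta> * sqrt (real m * a)) (real m * c) = 1"
  proof (rule eventually_mono, elim conjE)
    fix m :: nat
    define r where "r = sqrt (real m * c)"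
    define p where "p = real m * a + \<beta> * sqrt (real m * a) - 1"
    assume drift: "real m * c - p \<ge> 3 * r" and p: "p \<ge> 0" and m: "real m \<ge> 1"
    have lam: "real m * c > 0" using m a ca by simp
    hence r: "r > 0" and rr: "r * r = real m * c" by (simp_all add: r_def)
    have "kernel_mass r p \<le> 1 / 2" using kernel_mass_le_half[OF r p] drift rr by simp
    moreover have "kernel_mass r p > 0" by (rule kernel_mass_pos[OF r p])
    ultimately have "inverse (kernel_mass r p) \<ge> 2" by (simp add: field_simps)
    hence "min 1 (inverse (kernel_mass r p)) = 1" by simp
    thus "alpha_bar (real m * a + \<beta> * sqrt (real m * a)) (real m * c) = 1"
      using lam by (simp add: alpha_bar_kernel_mass r_def p_def)
  qed
qed

section \<open>Underload: alpha_bar tends to 0\<close>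

text \<open>If p \<ge> r^2 (1 + d), the kernel is at least d r / 2 on [d r / 2, d r].\<close>
lemma kernel_mass_ge:
  fixes r p d :: real
  assumes r: "r > 0" and d: "d > 0" and p: "p \<ge> r * r * (1 + d)"
  shows "kernel_mass r p \<ge> d * d * (r * r) / 4"
proof -
  have "(d * r / 2) * (d * r - d * r / 2) \<le> kernel_mass r p"
    unfolding kernel_mass_def
  proof (rule integral_ge_on_subinterval[OF kernel_integrable[OF r]])
    fix s :: real assume s: "s \<in> {d * r / 2..d * r}"
    define u where "u = s / r"
    have s0: "s \<ge> 0" using s d r by (auto intro: order_trans[of 0 "d * r / 2"])
    have u0: "u \<ge> 0" and ud: "u \<le> d"
      using s0 s r by (auto simp: u_def divide_le_eq mult.commute)
    have "u / (1 + d) \<le> u / (1 + u)" using u0 ud by (intro divide_left_mono) auto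
    also have "\<dots> \<le> ln (1 + u)" by (rule ln_one_plus_ge[OF u0])
    finally have "r * r * (1 + d) * (u / (1 + d)) \<le> p * ln (1 + u)"
      using p u0 d r by (intro mult_mono) (auto intro: order_trans[OF _ p])
    moreover have "r * r * (1 + d) * (u / (1 + d)) = r * s" using r d by (simp add: u_def)
    ultimately have "s * 1 \<le> erlang_kernel r p s"
      unfolding kernel_exp_form[OF r s0] using s0 by (intro mult_left_mono) (auto simp: u_def)
    thus "d * r / 2 \<le> erlang_kernel r p s" using s by simp
  qed (use kernel_nonneg[OF r] d r in auto)
  thus ?thesis by (simp add: field_simps)
qed

text \<open>Arrival rate m c with c < a: alpha_bar is O(1/m).\<close>
lemma alpha_bar_underload_limit:
  fixes a c \<beta> :: real
  assumes a: "a > 0" and c: "c > 0" and ca: "c < a" and b: "\<beta> > 0"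
  shows "(\<lambda>m. alpha_bar (real m * a + \<beta> * sqrt (real m * a)) (real m * c)) \<longlonglongrightarrow> 0"
proof -
  define d where "d = (a - c) / (2 * c)"
  have d: "d > 0" and cd: "c * (1 + d) < a" using ca c by (simp_all add: d_def field_simps)
  define C where "C = 4 / (d * d * c)"
  have "\<forall>\<^sub>F m in sequentially. real m * a + \<beta> * sqrt (real m * a) - 1 \<ge> (real m * c) * (1 + d)
      \<and> real m \<ge> 1"
    using a b c cd by (intro eventually_conj; real_asymp)
  hence bounds: "\<forall>\<^sub>F m in sequentially. 0 \<le> alpha_bar (real m * a + \<beta> * sqrt (real m * a)) (real m * c)
     \<and> alpha_bar (real m * a + \<beta> * sqrt (real m * a)) (real m * c) \<le> C / real m"
  proof (rule eventually_mono, elim conjE)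
    fix m :: nat
    define r where "r = sqrt (real m * c)"
    define p where "p = real m * a + \<beta> * sqrt (real m * a) - 1"
    assume "p \<ge> real m * c * (1 + d)" and m: "real m \<ge> 1"
    have lam: "real m * c > 0" using m c by simp
    hence r: "r > 0" and rr: "r * r = real m * c" by (simp_all add: r_def)
    have mass: "kernel_mass r p \<ge> d * d * (real m * c) / 4"
      using kernel_mass_ge[OF r d, of p] \<open>p \<ge> real m * c * (1 + d)\<close> by (simp add: rr)
    have pos: "d * d * (real m * c) / 4 > 0" using d lam by simp
    have "inverse (kernel_mass r p) \<le> inverse (d * d * (real m * c) / 4)"
      using mass pos by (intro le_imp_inverse_le) auto
    also have "\<dots> = C / real m" using d c m by (simp add: C_def field_simps)
    finally have "min 1 (inverse (kernel_mass r p)) \<le> C / real m" by simp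
    moreover have "0 \<le> min 1 (inverse (kernel_mass r p))" using mass pos by simp
    ultimately show "0 \<le> alpha_bar (real m * a + \<beta> * sqrt (real m * a)) (real m * c)
       \<and> alpha_bar (real m * a + \<beta> * sqrt (real m * a)) (real m * c) \<le> C / real m"
      using lam by (simp add: alpha_bar_kernel_mass r_def p_def)
  qed
  show ?thesis
    by (rule tendsto_sandwich[OF eventually_mono[OF bounds] eventually_mono[OF bounds]
          tendsto_const lim_const_over_n]) auto
qed

theorem corollary1:
  fixes \<Omega> :: "'a set" and \<Lambda>0 :: "'a \<Rightarrow> real" and \<beta> :: real and wkey :: 'a
  assumes "finite \<Omega>"
    and "\<And>w. w \<in> \<Omega> \<Longrightarrow> \<Lambda>0 w > 0"
    and "\<beta> > 0"
    and "wkey \<in> \<Omega>"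
  defines "n \<equiv> (\<lambda>m::nat. real m * \<Lambda>0 wkey + \<beta> * sqrt (real m * \<Lambda>0 wkey))"
  shows "(\<exists>L. (\<lambda>m. alpha_bar (n m) (real m * \<Lambda>0 wkey)) \<longlonglongrightarrow> L \<and> 0 < L \<and> L < 1)
    \<and> (\<forall>w\<in>\<Omega>. \<Lambda>0 w > \<Lambda>0 wkey \<longrightarrow> (\<lambda>m. alpha_bar (n m) (real m * \<Lambda>0 w)) \<longlonglongrightarrow> 1)
    \<and> (\<forall>w\<in>\<Omega>. \<Lambda>0 w < \<Lambda>0 wkey \<longrightarrow> (\<lambda>m. alpha_bar (n m) (real m * \<Lambda>0 w)) \<longlonglongrightarrow> 0)"
proof -
  have key_pos: "\<Lambda>0 wkey > 0" using assms(2,4) by blast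
  show ?thesis
    unfolding n_def
    using alpha_bar_critical_limit[OF key_pos assms(3)]
      alpha_bar_overload_limit[OF key_pos _ assms(3)]
      alpha_bar_underload_limit[OF key_pos _ _ assms(3)] assms(2)
    by blast
qed

end
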